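(* Let $X,Y$ be sets, $f:X\to X$, and $(\mathcal{B},\mathcal{B}',\langle\cdot,\cdot\rangle,k)$ an RKBS with kernel on $X$ such that $\{k(x,\cdot):x\in X\}$ is linearly independent. Let $g:Y\to Y$ and let $\phi:Y\to X$ be a bijection with $\phi\circ g=f\circ\phi$. Let $(\mathcal{B}_\phi,\mathcal{B}'_\phi,\langle\cdot,\cdot\rangle_\phi,k_\phi)$ be the pullback RKBS on $Y$, and let $S:\mathcal{B}'_\phi\to\mathcal{B}'$, $Sh:=h\circ\phi^{-1}$. Then on $\mathrm{Span}\{k_\phi(y,\cdot):y\in Y\}$, $$K_fS=SK_g.$$ In particular, if $K_f$ is bounded (on $\mathrm{Span}\{k(x,\cdot):x\in X\}$ with the norm of $\mathcal{B}'$), then so is $K_g$ (with the norm of $\mathcal{B}'_\phi$), and the norms of their bounded extensions coincide: $\|\overline{K}_g\|=\|\overline{K}_f\|$.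
   Context: An RKBS with kernel on $X$ is a quadruple $(\mathcal{B},\mathcal{B}',\langle\cdot,\cdot\rangle,k)$: $\mathcal{B},\mathcal{B}'$ Banach spaces of functions on $X$ (pointwise operations), point evaluations on $\mathcal{B}$ continuous, $\langle\cdot,\cdot\rangle:\mathcal{B}\times\mathcal{B}'\to\mathbb{K}$ continuous bilinear, $k:X\times X\to\mathbb{K}$ with $k(x,\cdot)\in\mathcal{B}'$ and $h(x)=\langle h,k(x,\cdot)\rangle$ for all $h\in\mathcal{B}$, $x\in X$. Pullback RKBS: $\mathcal{B}_\phi:=\{h\circ\phi:h\in\mathcal{B}\}$ with $\|h\|_{\mathcal{B}_\phi}:=\|h\circ\phi^{-1}\|_\mathcal{B}$, $\mathcal{B}'_\phi:=\{h\circ\phi:h\in\mathcal{B}'\}$ with $\|h\|_{\mathcal{B}'_\phi}:=\|h\circ\phi^{-1}\|_{\mathcal{B}'}$, $\langle h,h'\rangle_\phi:=\langle h\circ\phi^{-1},h'\circ\phi^{-1}\rangle$, $k_\phi(y_1,y_2):=k(\phi(y_1),\phi(y_2))$; it is an RKBS with kernel on $Y$. Perron–Frobenius operators: $K_f$ on $\mathrm{Span}\{k(x,\cdot):x\in X\}$ is the linear extension of $k(x,\cdot)\mapsto k(f(x),\cdot)$; $K_g$ on $\mathrm{Span}\{k_\phi(y,\cdot):y\in Y\}$ is the linear extension of $k_\phi(y,\cdot)\mapsto k_\phi(g(y),\cdot)$. $\overline{K}_f,\overline{K}_g$ denote the bounded extensions to the norm closures of these spans. *)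

theory Defs
  imports "HOL-Analysis.Analysis"
begin

definition banach_fun_space ::
  "('x \<Rightarrow> 'k::{real_normed_field,banach}) set \<Rightarrow> (('x \<Rightarrow> 'k) \<Rightarrow> real) \<Rightarrow> bool" where
  "banach_fun_space B nB \<longleftrightarrow>
     (\<lambda>_. 0) \<in> B \<and>
     (\<forall>h\<in>B. \<forall>h'\<in>B. (\<lambda>x. h x + h' x) \<in> B) \<and>
     (\<forall>c. \<forall>h\<in>B. (\<lambda>x. c * h x) \<in> B) \<and>
     (\<forall>h\<in>B. 0 \<le> nB h) \<and>
     (\<forall>h\<in>B. nB h = 0 \<longleftrightarrow> h = (\<lambda>_. 0)) \<and>
     (\<forall>c. \<forall>h\<in>B. nB (\<lambda>x. c * h x) = norm c * nB h) \<and>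
     (\<forall>h\<in>B. \<forall>h'\<in>B. nB (\<lambda>x. h x + h' x) \<le> nB h + nB h') \<and>
     (\<forall>s. (\<forall>n. s n \<in> B) \<and>
          (\<forall>e>0. \<exists>N. \<forall>m\<ge>N. \<forall>n\<ge>N. nB (\<lambda>x. s m x - s n x) < e)
        \<longrightarrow> (\<exists>h\<in>B. (\<lambda>n. nB (\<lambda>x. s n x - h x)) \<longlonglongrightarrow> 0))"

text \<open>RKBS with kernel: quadruple (B, B', pairing, k), norms nB, nB'.
  The kernel is curried: \<open>k x\<close> is the function \<open>k(x,\<cdot>)\<close>.\<close>
definition is_rkbs ::
  "('x \<Rightarrow> 'k::{real_normed_field,banach}) set \<Rightarrow> (('x \<Rightarrow> 'k) \<Rightarrow> real) \<Rightarrow>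
   ('x \<Rightarrow> 'k) set \<Rightarrow> (('x \<Rightarrow> 'k) \<Rightarrow> real) \<Rightarrow>
   (('x \<Rightarrow> 'k) \<Rightarrow> ('x \<Rightarrow> 'k) \<Rightarrow> 'k) \<Rightarrow> ('x \<Rightarrow> 'x \<Rightarrow> 'k) \<Rightarrow> bool" where
  "is_rkbs B nB B' nB' pair k \<longleftrightarrow>
     banach_fun_space B nB \<and> banach_fun_space B' nB' \<and>
     (\<forall>x. \<exists>C. \<forall>h\<in>B. norm (h x) \<le> C * nB h) \<and>
     (\<forall>h'\<in>B'. \<forall>h1\<in>B. \<forall>h2\<in>B. \<forall>c.
        pair (\<lambda>x. h1 x + c * h2 x) h' = pair h1 h' + c * pair h2 h') \<and>
     (\<forall>h\<in>B. \<forall>h1'\<in>B'. \<forall>h2'\<in>B'. \<forall>c.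
        pair h (\<lambda>x. h1' x + c * h2' x) = pair h h1' + c * pair h h2') \<and>
     (\<exists>C. \<forall>h\<in>B. \<forall>h'\<in>B'. norm (pair h h') \<le> C * nB h * nB' h') \<and>
     (\<forall>x. k x \<in> B') \<and>
     (\<forall>h\<in>B. \<forall>x. h x = pair h (k x))"

definition kernel_lin_indep :: "('x \<Rightarrow> 'x \<Rightarrow> 'k::field) \<Rightarrow> bool" where
  "kernel_lin_indep k \<longleftrightarrow>
     (\<forall>A c. finite A \<and> (\<lambda>y. \<Sum>x\<in>A. c x * k x y) = (\<lambda>_. 0) \<longrightarrow> (\<forall>x\<in>A. c x = 0))"

definition kspan :: "('x \<Rightarrow> 'x \<Rightarrow> 'k::field) \<Rightarrow> ('x \<Rightarrow> 'k) set" where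
  "kspan k = {(\<lambda>y. \<Sum>x\<in>A. c x * k x y) | A c. finite A}"

text \<open>Perron--Frobenius operator: linear extension of \<open>k(x,\<cdot>) \<mapsto> k(f x,\<cdot>)\<close>
  (well defined on kspan k when the kernel sections are linearly independent).\<close>
definition PF :: "('x \<Rightarrow> 'x \<Rightarrow> 'k::field) \<Rightarrow> ('x \<Rightarrow> 'x) \<Rightarrow> ('x \<Rightarrow> 'k) \<Rightarrow> ('x \<Rightarrow> 'k)" where
  "PF k f h = (THE h'. \<exists>A c. finite A \<and> h = (\<lambda>y. \<Sum>x\<in>A. c x * k x y) \<and>
                               h' = (\<lambda>y. \<Sum>x\<in>A. c x * k (f x) y))"

definition bounded_on_span ::
  "('x \<Rightarrow> 'x \<Rightarrow> 'k::field) \<Rightarrow> (('x \<Rightarrow> 'k) \<Rightarrow> real) \<Rightarrow> (('x \<Rightarrow> 'k) \<Rightarrow> ('x \<Rightarrow> 'k)) \<Rightarrow> bool" where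
  "bounded_on_span k nB' T \<longleftrightarrow> (\<exists>C. \<forall>h\<in>kspan k. nB' (T h) \<le> C * nB' h)"

definition span_closure ::
  "('x \<Rightarrow> 'k::{real_normed_field,banach}) set \<Rightarrow> (('x \<Rightarrow> 'k) \<Rightarrow> real) \<Rightarrow> ('x \<Rightarrow> 'x \<Rightarrow> 'k) \<Rightarrow> ('x \<Rightarrow> 'k) set" where
  "span_closure B' nB' k = {h \<in> B'. \<exists>s. (\<forall>n. s n \<in> kspan k) \<and>
                                         (\<lambda>n. nB' (\<lambda>x. s n x - h x)) \<longlonglongrightarrow> 0}"

definition bext ::
  "('x \<Rightarrow> 'k::{real_normed_field,banach}) set \<Rightarrow> (('x \<Rightarrow> 'k) \<Rightarrow> real) \<Rightarrow> ('x \<Rightarrow> 'x \<Rightarrow> 'k) \<Rightarrow>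
   (('x \<Rightarrow> 'k) \<Rightarrow> ('x \<Rightarrow> 'k)) \<Rightarrow> ('x \<Rightarrow> 'k) \<Rightarrow> ('x \<Rightarrow> 'k)" where
  "bext B' nB' k T h = (THE h'. h' \<in> B' \<and>
     (\<forall>s. (\<forall>n. s n \<in> kspan k) \<and> (\<lambda>n. nB' (\<lambda>x. s n x - h x)) \<longlonglongrightarrow> 0 \<longrightarrow>
          (\<lambda>n. nB' (\<lambda>x. T (s n) x - h' x)) \<longlonglongrightarrow> 0))"

definition bext_norm ::
  "('x \<Rightarrow> 'k::{real_normed_field,banach}) set \<Rightarrow> (('x \<Rightarrow> 'k) \<Rightarrow> real) \<Rightarrow> ('x \<Rightarrow> 'x \<Rightarrow> 'k) \<Rightarrow>
   (('x \<Rightarrow> 'k) \<Rightarrow> ('x \<Rightarrow> 'k)) \<Rightarrow> real" where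
  "bext_norm B' nB' k T =
     (SUP h\<in>{h \<in> span_closure B' nB' k. nB' h \<le> 1}. nB' (bext B' nB' k T h))"

definition pb_space :: "('y \<Rightarrow> 'x) \<Rightarrow> ('x \<Rightarrow> 'k) set \<Rightarrow> ('y \<Rightarrow> 'k) set" where
  "pb_space \<phi> B = {h \<circ> \<phi> | h. h \<in> B}"

definition pb_norm :: "('y \<Rightarrow> 'x) \<Rightarrow> (('x \<Rightarrow> 'k) \<Rightarrow> real) \<Rightarrow> ('y \<Rightarrow> 'k) \<Rightarrow> real" where
  "pb_norm \<phi> nB h = nB (h \<circ> inv \<phi>)"

definition pb_pair :: "('y \<Rightarrow> 'x) \<Rightarrow> (('x \<Rightarrow> 'k) \<Rightarrow> ('x \<Rightarrow> 'k) \<Rightarrow> 'k) \<Rightarrow>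
    ('y \<Rightarrow> 'k) \<Rightarrow> ('y \<Rightarrow> 'k) \<Rightarrow> 'k" where
  "pb_pair \<phi> pair h h' = pair (h \<circ> inv \<phi>) (h' \<circ> inv \<phi>)"

definition pb_kernel :: "('y \<Rightarrow> 'x) \<Rightarrow> ('x \<Rightarrow> 'x \<Rightarrow> 'k) \<Rightarrow> 'y \<Rightarrow> 'y \<Rightarrow> 'k" where
  "pb_kernel \<phi> k y1 y2 = k (\<phi> y1) (\<phi> y2)"

definition pb_S :: "('y \<Rightarrow> 'x) \<Rightarrow> ('y \<Rightarrow> 'k) \<Rightarrow> ('x \<Rightarrow> 'k)" where
  "pb_S \<phi> h = h \<circ> inv \<phi>"

end

theory Submission
  imports Defs
begin

text \<open>Composition with the bijection \<open>\<phi>\<close> maps every object of the original RKBS onto its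
  pullback counterpart: it sends \<open>k(\<phi> y,\<cdot>)\<close> to \<open>k\<^sub>\<phi>(y,\<cdot>)\<close>, hence the span onto the span,
  is isometric for the pulled-back norms, and intertwines the Perron--Frobenius operators because
  \<open>\<phi> \<circ> g = f \<circ> \<phi>\<close>. The only analytic input is that an operator bounded on the span has a unique
  continuous extension to its closure, obtained from Cauchy sequences in the complete space
  \<open>B'\<close>; since this extension is characterised purely in terms of the transported data, it is
  itself transported, and so are the suprema defining the operator norms.\<close>

lemma comp_comp_inv_surj [simp]: "surj \<phi> \<Longrightarrow> u \<circ> \<phi> \<circ> inv \<phi> = u"
  by (simp add: comp_assoc surj_iff)

lemma comp_surj_eq_iff: "surj \<phi> \<Longrightarrow> u \<circ> \<phi> = v \<circ> \<phi> \<longleftrightarrow> u = v"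
  by (metis comp_comp_inv_surj)

lemma sum_restrict_superset:
  fixes c :: "'a \<Rightarrow> 'b::semiring_0"
  assumes "finite D" "A \<subseteq> D"
  shows "(\<Sum>x\<in>A. c x * F x) = (\<Sum>x\<in>D. (if x \<in> A then c x else 0) * F x)"
  using assms by (intro sum.mono_neutral_cong_left) auto

lemma kernel_sum_coeffs_unique:
  fixes k :: "'x \<Rightarrow> 'x \<Rightarrow> 'k::field"
  assumes indep: "kernel_lin_indep k" and "finite A" "finite A'"
    and eq: "(\<lambda>y. \<Sum>x\<in>A. c x * k x y) = (\<lambda>y. \<Sum>x\<in>A'. c' x * k x y)"
  shows "(\<Sum>x\<in>A. c x * F x) = (\<Sum>x\<in>A'. c' x * F x)"
proof -
  define D where "D = A \<union> A'"
  define d where "d x = (if x \<in> A then c x else 0) - (if x \<in> A' then c' x else 0)" for x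
  have D: "finite D" using assms by (simp add: D_def)
  have sum_d: "(\<Sum>x\<in>D. d x * G x) = (\<Sum>x\<in>A. c x * G x) - (\<Sum>x\<in>A'. c' x * G x)" for G
    using sum_restrict_superset[OF D, of A c G] sum_restrict_superset[OF D, of A' c' G]
    by (simp add: d_def D_def left_diff_distrib sum_subtractf)
  have "(\<lambda>y. \<Sum>x\<in>D. d x * k x y) = (\<lambda>_. 0)"
    using eq by (simp add: sum_d fun_eq_iff)
  then have "\<forall>x\<in>D. d x = 0"
    using indep D unfolding kernel_lin_indep_def by blast
  then have "(\<Sum>x\<in>D. d x * F x) = 0" by simp
  then show ?thesis by (simp add: sum_d)
qed

lemma PF_kernel_sum:
  assumes "kernel_lin_indep k" "finite A"
  shows "PF k f (\<lambda>y. \<Sum>x\<in>A. c x * k x y) = (\<lambda>y. \<Sum>x\<in>A. c x * k (f x) y)"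
  unfolding PF_def
proof (rule the_equality)
  show "\<exists>A' c'. finite A' \<and> (\<lambda>y. \<Sum>x\<in>A. c x * k x y) = (\<lambda>y. \<Sum>x\<in>A'. c' x * k x y) \<and>
      (\<lambda>y. \<Sum>x\<in>A. c x * k (f x) y) = (\<lambda>y. \<Sum>x\<in>A'. c' x * k (f x) y)"
    using assms(2) by blast
next
  fix h'
  assume "\<exists>A' c'. finite A' \<and> (\<lambda>y. \<Sum>x\<in>A. c x * k x y) = (\<lambda>y. \<Sum>x\<in>A'. c' x * k x y) \<and>
      h' = (\<lambda>y. \<Sum>x\<in>A'. c' x * k (f x) y)"
  then obtain A' c' where "finite A'" and h': "h' = (\<lambda>y. \<Sum>x\<in>A'. c' x * k (f x) y)"
    and eq: "(\<lambda>y. \<Sum>x\<in>A. c x * k x y) = (\<lambda>y. \<Sum>x\<in>A'. c' x * k x y)"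
    by blast
  then show "h' = (\<lambda>y. \<Sum>x\<in>A. c x * k (f x) y)"
    by (simp add: kernel_sum_coeffs_unique[OF assms \<open>finite A'\<close> eq])
qed

lemma kspan_common_support:
  assumes "a \<in> kspan k" "b \<in> kspan k"
  obtains D ca cb where "finite D" "a = (\<lambda>y. \<Sum>x\<in>D. ca x * k x y)" "b = (\<lambda>y. \<Sum>x\<in>D. cb x * k x y)"
proof -
  obtain A c A' c' where "finite A" "a = (\<lambda>y. \<Sum>x\<in>A. c x * k x y)"
    and "finite A'" "b = (\<lambda>y. \<Sum>x\<in>A'. c' x * k x y)"
    using assms unfolding kspan_def by blast
  moreover define D where "D = A \<union> A'"
  ultimately have D: "finite D" "A \<subseteq> D" "A' \<subseteq> D" by simp_all
  show ?thesis
  proof (rule that[OF D(1)])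
    show "a = (\<lambda>y. \<Sum>x\<in>D. (if x \<in> A then c x else 0) * k x y)"
      by (simp add: \<open>a = _\<close> sum_restrict_superset[OF D(1,2)])
    show "b = (\<lambda>y. \<Sum>x\<in>D. (if x \<in> A' then c' x else 0) * k x y)"
      by (simp add: \<open>b = _\<close> sum_restrict_superset[OF D(1,3)])
  qed
qed

lemma kspanI: "finite A \<Longrightarrow> (\<lambda>y. \<Sum>x\<in>A. c x * k x y) \<in> kspan k"
  unfolding kspan_def by blast

lemma kspan_diff:
  assumes "a \<in> kspan k" "b \<in> kspan k"
  shows "(\<lambda>x. a x - b x) \<in> kspan k"
proof -
  obtain D ca cb where "finite D" "a = (\<lambda>y. \<Sum>x\<in>D. ca x * k x y)" "b = (\<lambda>y. \<Sum>x\<in>D. cb x * k x y)"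
    using kspan_common_support[OF assms] .
  then show ?thesis
    using kspanI[of D "\<lambda>x. ca x - cb x" k] by (simp add: left_diff_distrib sum_subtractf)
qed

lemma PF_diff:
  assumes "kernel_lin_indep k" "a \<in> kspan k" "b \<in> kspan k"
  shows "PF k f (\<lambda>x. a x - b x) = (\<lambda>x. PF k f a x - PF k f b x)"
proof -
  obtain D ca cb where D: "finite D" and a: "a = (\<lambda>y. \<Sum>x\<in>D. ca x * k x y)"
    and b: "b = (\<lambda>y. \<Sum>x\<in>D. cb x * k x y)"
    using kspan_common_support[OF assms(2,3)] .
  have "(\<lambda>x. a x - b x) = (\<lambda>y. \<Sum>x\<in>D. (ca x - cb x) * k x y)"
    unfolding a b by (simp add: left_diff_distrib sum_subtractf)
  then have "PF k f (\<lambda>x. a x - b x) = (\<lambda>y. \<Sum>x\<in>D. (ca x - cb x) * k (f x) y)"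
    using PF_kernel_sum[OF assms(1) D] by simp
  also have "\<dots> = (\<lambda>x. PF k f a x - PF k f b x)"
    unfolding a b PF_kernel_sum[OF assms(1) D] by (simp add: left_diff_distrib sum_subtractf)
  finally show ?thesis .
qed

lemma kernel_sum_comp_conj:
  assumes bij: "bij \<phi>" and conj: "\<phi> \<circ> g = f \<circ> \<phi>"
  shows "(\<lambda>z. \<Sum>x\<in>A. c x * k (f x) z) \<circ> \<phi>
    = (\<lambda>y. \<Sum>a\<in>inv \<phi> ` A. c (\<phi> a) * pb_kernel \<phi> k (g a) y)"
proof
  fix y
  have "inj_on (inv \<phi>) A"
    using bij by (meson bij_imp_bij_inv bij_is_inj inj_on_subset subset_UNIV)
  moreover have "\<phi> (g (inv \<phi> x)) = f x" for x
    using conj bij by (metis bij_inv_eq_iff comp_apply)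
  ultimately show "((\<lambda>z. \<Sum>x\<in>A. c x * k (f x) z) \<circ> \<phi>) y
      = (\<Sum>a\<in>inv \<phi> ` A. c (\<phi> a) * pb_kernel \<phi> k (g a) y)"
    using bij by (simp add: sum.reindex pb_kernel_def surj_f_inv_f[OF bij_is_surj])
qed

lemma kernel_sum_comp:
  assumes "bij \<phi>"
  shows "(\<lambda>z. \<Sum>x\<in>A. c x * k x z) \<circ> \<phi> = (\<lambda>y. \<Sum>a\<in>inv \<phi> ` A. c (\<phi> a) * pb_kernel \<phi> k a y)"
  using kernel_sum_comp_conj[OF assms, where g = id and f = id] by simp

lemma pb_kernel_sum_eq_comp:
  assumes "bij \<phi>"
  shows "(\<lambda>y. \<Sum>x\<in>A. c x * pb_kernel \<phi> k x y) = (\<lambda>z. \<Sum>x\<in>\<phi> ` A. c (inv \<phi> x) * k x z) \<circ> \<phi>"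
  using kernel_sum_comp[OF assms, where A = "\<phi> ` A" and c = "\<lambda>x. c (inv \<phi> x)"] assms
  by (simp add: image_comp bij_is_inj)

lemma kernel_lin_indep_pb_kernel:
  assumes indep: "kernel_lin_indep k" and bij: "bij \<phi>"
  shows "kernel_lin_indep (pb_kernel \<phi> k)"
  unfolding kernel_lin_indep_def
proof (intro allI impI ballI)
  fix A c a
  assume A: "finite A \<and> (\<lambda>y. \<Sum>x\<in>A. c x * pb_kernel \<phi> k x y) = (\<lambda>_. 0)" and "a \<in> A"
  define F where "F = (\<lambda>z. \<Sum>x\<in>\<phi> ` A. c (inv \<phi> x) * k x z)"
  have "F \<circ> \<phi> = (\<lambda>_. 0) \<circ> \<phi>"
    using A unfolding F_def pb_kernel_sum_eq_comp[OF bij] by (simp add: comp_def)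
  then have "F = (\<lambda>_. 0)"
    by (simp only: comp_surj_eq_iff[OF bij_is_surj[OF bij]])
  moreover have "finite (\<phi> ` A)" using A by simp
  ultimately have "\<forall>x\<in>\<phi> ` A. c (inv \<phi> x) = 0"
    using indep unfolding kernel_lin_indep_def F_def
    by (elim allE[of _ "\<phi> ` A"] allE[of _ "\<lambda>x. c (inv \<phi> x)"]) simp
  then have "c (inv \<phi> (\<phi> a)) = 0" using \<open>a \<in> A\<close> by blast
  then show "c a = 0" using bij by (simp add: bij_is_inj)
qed

lemma kspan_pb_kernel:
  assumes bij: "bij \<phi>"
  shows "kspan (pb_kernel \<phi> k) = (\<lambda>u. u \<circ> \<phi>) ` kspan k"
proof
  show "(\<lambda>u. u \<circ> \<phi>) ` kspan k \<subseteq> kspan (pb_kernel \<phi> k)"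
  proof
    fix H assume "H \<in> (\<lambda>u. u \<circ> \<phi>) ` kspan k"
    then obtain A c where "finite A" and H: "H = (\<lambda>z. \<Sum>x\<in>A. c x * k x z) \<circ> \<phi>"
      unfolding kspan_def by blast
    then show "H \<in> kspan (pb_kernel \<phi> k)"
      by (simp add: kernel_sum_comp[OF bij] kspanI)
  qed
next
  show "kspan (pb_kernel \<phi> k) \<subseteq> (\<lambda>u. u \<circ> \<phi>) ` kspan k"
  proof
    fix H assume "H \<in> kspan (pb_kernel \<phi> k)"
    then obtain A c where "finite A" and H: "H = (\<lambda>y. \<Sum>x\<in>A. c x * pb_kernel \<phi> k x y)"
      unfolding kspan_def by blast
    have "H = (\<lambda>z. \<Sum>x\<in>\<phi> ` A. c (inv \<phi> x) * k x z) \<circ> \<phi>"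
      unfolding H pb_kernel_sum_eq_comp[OF bij] ..
    moreover have "(\<lambda>z. \<Sum>x\<in>\<phi> ` A. c (inv \<phi> x) * k x z) \<in> kspan k"
      using \<open>finite A\<close> by (intro kspanI finite_imageI)
    ultimately show "H \<in> (\<lambda>u. u \<circ> \<phi>) ` kspan k" by blast
  qed
qed

lemma PF_pb_kernel_comp:
  assumes indep: "kernel_lin_indep k" and bij: "bij \<phi>" and conj: "\<phi> \<circ> g = f \<circ> \<phi>"
    and "u \<in> kspan k"
  shows "PF (pb_kernel \<phi> k) g (u \<circ> \<phi>) = PF k f u \<circ> \<phi>"
proof -
  obtain A c where A: "finite A" and u: "u = (\<lambda>z. \<Sum>x\<in>A. c x * k x z)"
    using \<open>u \<in> kspan k\<close> unfolding kspan_def by blast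
  have "u \<circ> \<phi> = (\<lambda>y. \<Sum>a\<in>inv \<phi> ` A. c (\<phi> a) * pb_kernel \<phi> k a y)"
    by (simp add: u kernel_sum_comp[OF bij])
  then have "PF (pb_kernel \<phi> k) g (u \<circ> \<phi>)
      = (\<lambda>y. \<Sum>a\<in>inv \<phi> ` A. c (\<phi> a) * pb_kernel \<phi> k (g a) y)"
    using PF_kernel_sum[OF kernel_lin_indep_pb_kernel[OF indep bij]] A by simp
  also have "\<dots> = PF k f u \<circ> \<phi>"
    by (simp add: u PF_kernel_sum[OF indep A] kernel_sum_comp_conj[OF bij conj])
  finally show ?thesis .
qed

context
  fixes B :: "('x \<Rightarrow> 'k::{real_normed_field,banach}) set" and nB
  assumes B: "banach_fun_space B nB"
begin

lemma banach_fun_space_add: "a \<in> B \<Longrightarrow> b \<in> B \<Longrightarrow> (\<lambda>x. a x + b x) \<in> B"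
  using B unfolding banach_fun_space_def by blast

lemma banach_fun_space_scale: "a \<in> B \<Longrightarrow> (\<lambda>x. c * a x) \<in> B"
  using B unfolding banach_fun_space_def by blast

lemma banach_fun_space_diff:
  assumes "a \<in> B" "b \<in> B"
  shows "(\<lambda>x. a x - b x) \<in> B"
  using banach_fun_space_add[OF assms(1) banach_fun_space_scale[OF assms(2), of "-1"]] by simp

lemma banach_fun_space_sum:
  "finite A \<Longrightarrow> (\<And>x. x \<in> A \<Longrightarrow> F x \<in> B) \<Longrightarrow> (\<lambda>y. \<Sum>x\<in>A. c x * F x y) \<in> B"
proof (induction A rule: finite_induct)
  case empty
  then show ?case using B unfolding banach_fun_space_def by simp
next
  case (insert a A)
  then show ?case by (simp add: banach_fun_space_add banach_fun_space_scale)
qed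

lemma banach_fun_space_dist_nonneg:
  assumes "a \<in> B" "b \<in> B"
  shows "0 \<le> nB (\<lambda>x. a x - b x)"
  using B banach_fun_space_diff[OF assms] unfolding banach_fun_space_def by blast

lemma banach_fun_space_dist_commute:
  assumes "a \<in> B" "b \<in> B"
  shows "nB (\<lambda>x. a x - b x) = nB (\<lambda>x. b x - a x)"
proof -
  have "\<forall>c. \<forall>h\<in>B. nB (\<lambda>x. c * h x) = norm c * nB h"
    using B unfolding banach_fun_space_def by blast
  from this[rule_format, OF banach_fun_space_diff[OF assms], of "-1"]
  have "nB (\<lambda>x. (-1) * (a x - b x)) = norm (-1::'k) * nB (\<lambda>x. a x - b x)" .
  then show ?thesis by simp
qed

lemma banach_fun_space_dist_triangle:
  assumes "a \<in> B" "b \<in> B" "c \<in> B"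
  shows "nB (\<lambda>x. a x - c x) \<le> nB (\<lambda>x. a x - b x) + nB (\<lambda>x. b x - c x)"
proof -
  have "\<forall>h\<in>B. \<forall>h'\<in>B. nB (\<lambda>x. h x + h' x) \<le> nB h + nB h'"
    using B unfolding banach_fun_space_def by blast
  from this[rule_format, OF banach_fun_space_diff[OF assms(1,2)] banach_fun_space_diff[OF assms(2,3)]]
  have "nB (\<lambda>x. (a x - b x) + (b x - c x)) \<le> nB (\<lambda>x. a x - b x) + nB (\<lambda>x. b x - c x)" .
  then show ?thesis by simp
qed

lemma banach_fun_space_dist_eq_0:
  assumes "a \<in> B" "b \<in> B"
  shows "nB (\<lambda>x. a x - b x) = 0 \<longleftrightarrow> a = b"
proof -
  have "\<forall>h\<in>B. nB h = 0 \<longleftrightarrow> h = (\<lambda>_. 0)"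
    using B unfolding banach_fun_space_def by blast
  then have "nB (\<lambda>x. a x - b x) = 0 \<longleftrightarrow> (\<lambda>x. a x - b x) = (\<lambda>_. 0)"
    using banach_fun_space_diff[OF assms] by blast
  then show ?thesis by (simp add: fun_eq_iff)
qed

lemma banach_fun_space_complete:
  "(\<And>n. s n \<in> B) \<Longrightarrow> (\<forall>e>0. \<exists>N. \<forall>m\<ge>N. \<forall>n\<ge>N. nB (\<lambda>x. s m x - s n x) < e)
   \<Longrightarrow> \<exists>h\<in>B. (\<lambda>n. nB (\<lambda>x. s n x - h x)) \<longlonglongrightarrow> 0"
  using B unfolding banach_fun_space_def by blast

lemma kspan_subset: "(\<And>x. k x \<in> B) \<Longrightarrow> kspan k \<subseteq> B"
  unfolding kspan_def by (auto intro: banach_fun_space_sum)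

lemma PF_mem:
  assumes "\<And>x. k x \<in> B" "kernel_lin_indep k" "u \<in> kspan k"
  shows "PF k f u \<in> B"
proof -
  obtain A c where "finite A" and u: "u = (\<lambda>y. \<Sum>x\<in>A. c x * k x y)"
    using \<open>u \<in> kspan k\<close> unfolding kspan_def by blast
  then show ?thesis
    using assms(1) by (simp add: PF_kernel_sum[OF assms(2)] banach_fun_space_sum)
qed

end

lemma LIMSEQ_0_le_bound:
  fixes a b :: "nat \<Rightarrow> real"
  assumes "\<And>n. 0 \<le> a n" "\<And>n. a n \<le> b n" "b \<longlonglongrightarrow> 0"
  shows "a \<longlonglongrightarrow> 0"
  by (rule tendsto_sandwich[of "\<lambda>_. 0" a _ b]) (simp_all add: assms)

lemma cauchy_of_dist_bound:
  fixes d :: "nat \<Rightarrow> nat \<Rightarrow> real"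
  assumes bound: "\<And>m n. d m n \<le> e m + e n" and e: "e \<longlonglongrightarrow> 0"
  shows "\<forall>\<epsilon>>0. \<exists>N. \<forall>m\<ge>N. \<forall>n\<ge>N. d m n < \<epsilon>"
proof (intro allI impI)
  fix \<epsilon> :: real assume "\<epsilon> > 0"
  then obtain N where N: "\<And>n. n \<ge> N \<Longrightarrow> \<bar>e n\<bar> < \<epsilon> / 2"
    using LIMSEQ_D[OF e, of "\<epsilon> / 2"] by auto
  have "d m n < \<epsilon>" if "m \<ge> N" "n \<ge> N" for m n
    using bound[of m n] N[OF that(1)] N[OF that(2)] by linarith
  then show "\<exists>N. \<forall>m\<ge>N. \<forall>n\<ge>N. d m n < \<epsilon>" by blast
qed

definition is_bext_value ::
  "('x \<Rightarrow> 'k::{real_normed_field,banach}) set \<Rightarrow> (('x \<Rightarrow> 'k) \<Rightarrow> real) \<Rightarrow> ('x \<Rightarrow> 'x \<Rightarrow> 'k) \<Rightarrow>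
   (('x \<Rightarrow> 'k) \<Rightarrow> ('x \<Rightarrow> 'k)) \<Rightarrow> ('x \<Rightarrow> 'k) \<Rightarrow> ('x \<Rightarrow> 'k) \<Rightarrow> bool" where
  "is_bext_value B' nB' k T h h' \<longleftrightarrow> h' \<in> B' \<and>
     (\<forall>s. (\<forall>n. s n \<in> kspan k) \<and> (\<lambda>n. nB' (\<lambda>x. s n x - h x)) \<longlonglongrightarrow> 0 \<longrightarrow>
          (\<lambda>n. nB' (\<lambda>x. T (s n) x - h' x)) \<longlonglongrightarrow> 0)"

lemma bext_eq_The: "bext B' nB' k T h = (THE h'. is_bext_value B' nB' k T h h')"
  by (simp add: bext_def is_bext_value_def)

lemma is_bext_value_unique:
  fixes B' :: "('x \<Rightarrow> 'k::{real_normed_field,banach}) set"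
  assumes B': "banach_fun_space B' nB'" and T_mem: "\<And>u. u \<in> kspan k \<Longrightarrow> T u \<in> B'"
    and h: "h \<in> span_closure B' nB' k"
    and h1: "is_bext_value B' nB' k T h h1" and h2: "is_bext_value B' nB' k T h h2"
  shows "h1 = h2"
proof -
  let ?d = "\<lambda>u v. nB' (\<lambda>x. u x - v x)"
  obtain s where s: "\<And>n. s n \<in> kspan k" and s_lim: "(\<lambda>n. ?d (s n) h) \<longlonglongrightarrow> 0"
    using h unfolding span_closure_def by blast
  have "h1 \<in> B'" and lim1: "(\<lambda>n. ?d (T (s n)) h1) \<longlonglongrightarrow> 0"
    using h1 s s_lim unfolding is_bext_value_def by blast+
  have "h2 \<in> B'" and lim2: "(\<lambda>n. ?d (T (s n)) h2) \<longlonglongrightarrow> 0"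
    using h2 s s_lim unfolding is_bext_value_def by blast+
  have "(\<lambda>n. ?d h1 h2) \<longlonglongrightarrow> 0"
  proof (rule LIMSEQ_0_le_bound)
    show "0 \<le> ?d h1 h2"
      using banach_fun_space_dist_nonneg[OF B' \<open>h1 \<in> B'\<close> \<open>h2 \<in> B'\<close>] .
    show "?d h1 h2 \<le> ?d (T (s n)) h1 + ?d (T (s n)) h2" for n
      using banach_fun_space_dist_triangle[OF B' \<open>h1 \<in> B'\<close> T_mem[OF s] \<open>h2 \<in> B'\<close>]
        banach_fun_space_dist_commute[OF B' \<open>h1 \<in> B'\<close> T_mem[OF s]]
      by simp
    show "(\<lambda>n. ?d (T (s n)) h1 + ?d (T (s n)) h2) \<longlonglongrightarrow> 0"
      using tendsto_add[OF lim1 lim2] by simp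
  qed
  then show ?thesis
    using banach_fun_space_dist_eq_0[OF B' \<open>h1 \<in> B'\<close> \<open>h2 \<in> B'\<close>] by (simp add: LIMSEQ_const_iff)
qed

context
  fixes B' :: "('x \<Rightarrow> 'k::{real_normed_field,banach}) set" and nB' k T C
  assumes B': "banach_fun_space B' nB'" and span: "kspan k \<subseteq> B'"
    and T_mem: "\<And>u. u \<in> kspan k \<Longrightarrow> T u \<in> B'"
    and T_diff: "\<And>a b. a \<in> kspan k \<Longrightarrow> b \<in> kspan k \<Longrightarrow> T (\<lambda>x. a x - b x) = (\<lambda>x. T a x - T b x)"
    and bound: "\<forall>u\<in>kspan k. nB' (T u) \<le> C * nB' u"
begin

lemma kspan_op_dist_le:
  assumes "a \<in> kspan k" "b \<in> kspan k" "h \<in> B'"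
  shows "nB' (\<lambda>x. T a x - T b x) \<le> \<bar>C\<bar> * (nB' (\<lambda>x. a x - h x) + nB' (\<lambda>x. b x - h x))"
proof -
  let ?d = "\<lambda>u v. nB' (\<lambda>x. u x - v x)"
  have "a \<in> B'" "b \<in> B'" using assms span by auto
  have "?d (T a) (T b) = nB' (T (\<lambda>x. a x - b x))" using T_diff assms by simp
  also have "\<dots> \<le> C * ?d a b" using bound kspan_diff assms by blast
  also have "\<dots> \<le> \<bar>C\<bar> * ?d a b"
    using banach_fun_space_dist_nonneg[OF B' \<open>a \<in> B'\<close> \<open>b \<in> B'\<close>] by (intro mult_right_mono) auto
  also have "\<dots> \<le> \<bar>C\<bar> * (?d a h + ?d b h)"
    using banach_fun_space_dist_triangle[OF B' \<open>a \<in> B'\<close> \<open>h \<in> B'\<close> \<open>b \<in> B'\<close>]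
      banach_fun_space_dist_commute[OF B' \<open>h \<in> B'\<close> \<open>b \<in> B'\<close>]
    by (intro mult_left_mono) auto
  finally show ?thesis .
qed

lemma is_bext_value_exists:
  assumes h: "h \<in> span_closure B' nB' k"
  obtains h' where "is_bext_value B' nB' k T h h'"
proof -
  let ?d = "\<lambda>u v. nB' (\<lambda>x. u x - v x)"
  obtain s where s: "\<And>n. s n \<in> kspan k" and "h \<in> B'"
    and s_lim: "(\<lambda>n. ?d (s n) h) \<longlonglongrightarrow> 0"
    using h unfolding span_closure_def by blast
  have "\<forall>\<epsilon>>0. \<exists>N. \<forall>m\<ge>N. \<forall>n\<ge>N. ?d (T (s m)) (T (s n)) < \<epsilon>"
  proof (rule cauchy_of_dist_bound)
    show "?d (T (s m)) (T (s n)) \<le> \<bar>C\<bar> * ?d (s m) h + \<bar>C\<bar> * ?d (s n) h" for m n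
      using kspan_op_dist_le[OF s s \<open>h \<in> B'\<close>] by (simp add: distrib_left)
    show "(\<lambda>n. \<bar>C\<bar> * ?d (s n) h) \<longlonglongrightarrow> 0"
      by (rule tendsto_mult_right_zero[OF s_lim])
  qed
  then obtain h' where "h' \<in> B'" and h'_lim: "(\<lambda>n. ?d (T (s n)) h') \<longlonglongrightarrow> 0"
    using banach_fun_space_complete[OF B', of "\<lambda>n. T (s n)"] T_mem[OF s] by blast
  have "is_bext_value B' nB' k T h h'"
    unfolding is_bext_value_def
  proof (intro conjI allI impI)
    fix t assume t: "(\<forall>n. t n \<in> kspan k) \<and> (\<lambda>n. ?d (t n) h) \<longlonglongrightarrow> 0"
    have t_mem: "T (t n) \<in> B'" for n using t T_mem by blast
    show "(\<lambda>n. ?d (T (t n)) h') \<longlonglongrightarrow> 0"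
    proof (rule LIMSEQ_0_le_bound)
      show "0 \<le> ?d (T (t n)) h'" for n
        using banach_fun_space_dist_nonneg[OF B' t_mem \<open>h' \<in> B'\<close>] .
      show "?d (T (t n)) h' \<le> \<bar>C\<bar> * (?d (t n) h + ?d (s n) h) + ?d (T (s n)) h'" for n
        using banach_fun_space_dist_triangle[OF B' t_mem T_mem[OF s] \<open>h' \<in> B'\<close>, of n n]
          kspan_op_dist_le[OF _ s \<open>h \<in> B'\<close>, of "t n" n] t
        by auto
      show "(\<lambda>n. \<bar>C\<bar> * (?d (t n) h + ?d (s n) h) + ?d (T (s n)) h') \<longlonglongrightarrow> 0"
        using tendsto_add[OF tendsto_mult[OF tendsto_const tendsto_add[OF conjunct2[OF t] s_lim]] h'_lim]
        by simp
    qed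
  qed (rule \<open>h' \<in> B'\<close>)
  then show thesis by (rule that)
qed

lemma ex1_bext_value:
  assumes "h \<in> span_closure B' nB' k"
  shows "\<exists>!h'. is_bext_value B' nB' k T h h'"
proof -
  obtain h' where "is_bext_value B' nB' k T h h'"
    using is_bext_value_exists[OF assms] .
  then show ?thesis
    using is_bext_value_unique[OF B', where T = T and k = k, OF T_mem assms] by blast
qed

end

lemma Collect_eq_image_comp:
  assumes "bij \<phi>"
  shows "{H. P H} = (\<lambda>h. h \<circ> \<phi>) ` {h. P (h \<circ> \<phi>)}"
proof (intro equalityI subsetI)
  fix H assume "H \<in> {H. P H}"
  then show "H \<in> (\<lambda>h. h \<circ> \<phi>) ` {h. P (h \<circ> \<phi>)}"
    using assms by (intro image_eqI[of H _ "H \<circ> inv \<phi>"]) (simp_all add: bij_is_inj)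
qed auto

lemma all_seq_comp_iff:
  assumes "bij \<phi>"
  shows "(\<forall>s. P s) \<longleftrightarrow> (\<forall>t. P (\<lambda>n. t n \<circ> \<phi>))"
proof
  assume P: "\<forall>t. P (\<lambda>n. t n \<circ> \<phi>)"
  show "\<forall>s. P s"
  proof
    fix s
    show "P s" using P[rule_format, of "\<lambda>n. s n \<circ> inv \<phi>"] assms by (simp add: bij_is_inj)
  qed
qed simp

lemma ex_seq_comp_iff:
  assumes "bij \<phi>"
  shows "(\<exists>s. P s) \<longleftrightarrow> (\<exists>t. P (\<lambda>n. t n \<circ> \<phi>))"
  using all_seq_comp_iff[OF assms, of "\<lambda>s. \<not> P s"] by blast

lemma comp_mem_kspan_pb_kernel_iff:
  "bij \<phi> \<Longrightarrow> u \<circ> \<phi> \<in> kspan (pb_kernel \<phi> k) \<longleftrightarrow> u \<in> kspan k"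
  by (auto simp: kspan_pb_kernel comp_surj_eq_iff bij_is_surj)

lemma comp_mem_pb_space_iff: "surj \<phi> \<Longrightarrow> u \<circ> \<phi> \<in> pb_space \<phi> B \<longleftrightarrow> u \<in> B"
  by (auto simp: pb_space_def comp_surj_eq_iff)

lemma pb_norm_comp: "surj \<phi> \<Longrightarrow> pb_norm \<phi> n (u \<circ> \<phi>) = n u"
  by (simp add: pb_norm_def)

lemma pb_norm_comp_diff:
  "surj \<phi> \<Longrightarrow> pb_norm \<phi> n (\<lambda>x. (u \<circ> \<phi>) x - (v \<circ> \<phi>) x) = n (\<lambda>x. u x - v x)"
  using pb_norm_comp[of \<phi> n "\<lambda>x. u x - v x"] by (simp add: comp_def)

lemma comp_mem_span_closure_pb_iff:
  assumes bij: "bij \<phi>"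
  shows "h \<circ> \<phi> \<in> span_closure (pb_space \<phi> B') (pb_norm \<phi> nB') (pb_kernel \<phi> k)
    \<longleftrightarrow> h \<in> span_closure B' nB' k"
  unfolding span_closure_def mem_Collect_eq
  by (subst ex_seq_comp_iff[OF bij])
    (simp only: comp_mem_kspan_pb_kernel_iff[OF bij] comp_mem_pb_space_iff[OF bij_is_surj[OF bij]]
      pb_norm_comp_diff[OF bij_is_surj[OF bij]])

lemma is_bext_value_pb_iff:
  assumes bij: "bij \<phi>" and T': "\<And>u. u \<in> kspan k \<Longrightarrow> T' (u \<circ> \<phi>) = T u \<circ> \<phi>"
  shows "is_bext_value (pb_space \<phi> B') (pb_norm \<phi> nB') (pb_kernel \<phi> k) T' (h \<circ> \<phi>) (h' \<circ> \<phi>)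
    \<longleftrightarrow> is_bext_value B' nB' k T h h'"
proof -
  note transport = comp_mem_kspan_pb_kernel_iff[OF bij] comp_mem_pb_space_iff[OF bij_is_surj[OF bij]]
    pb_norm_comp_diff[OF bij_is_surj[OF bij]]
  have "((\<forall>n. t n \<circ> \<phi> \<in> kspan (pb_kernel \<phi> k)) \<and>
        (\<lambda>n. pb_norm \<phi> nB' (\<lambda>x. (t n \<circ> \<phi>) x - (h \<circ> \<phi>) x)) \<longlonglongrightarrow> 0 \<longrightarrow>
        (\<lambda>n. pb_norm \<phi> nB' (\<lambda>x. T' (t n \<circ> \<phi>) x - (h' \<circ> \<phi>) x)) \<longlonglongrightarrow> 0)
    \<longleftrightarrow> ((\<forall>n. t n \<in> kspan k) \<and> (\<lambda>n. nB' (\<lambda>x. t n x - h x)) \<longlonglongrightarrow> 0 \<longrightarrow>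
        (\<lambda>n. nB' (\<lambda>x. T (t n) x - h' x)) \<longlonglongrightarrow> 0)" for t
  proof (cases "\<forall>n. t n \<in> kspan k")
    case True
    then have "T' (t n \<circ> \<phi>) = T (t n) \<circ> \<phi>" for n by (simp add: T')
    with True show ?thesis by (simp only: transport)
  next
    case False
    then show ?thesis by (simp only: transport) simp
  qed
  then show ?thesis
    unfolding is_bext_value_def
    by (subst all_seq_comp_iff[OF bij]) (simp only: transport)
qed

text \<open>Since \<open>bext\<close> is a definite description, it can only be transported where the
  characterising predicate has exactly one solution.\<close>

lemma bext_pb:
  assumes bij: "bij \<phi>" and T': "\<And>u. u \<in> kspan k \<Longrightarrow> T' (u \<circ> \<phi>) = T u \<circ> \<phi>"
    and ex1: "\<exists>!h'. is_bext_value B' nB' k T h h'"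
  shows "bext (pb_space \<phi> B') (pb_norm \<phi> nB') (pb_kernel \<phi> k) T' (h \<circ> \<phi>) = bext B' nB' k T h \<circ> \<phi>"
proof -
  note transport = is_bext_value_pb_iff[where T' = T' and T = T and k = k, OF bij T']
  have is_value: "is_bext_value B' nB' k T h (bext B' nB' k T h)"
    unfolding bext_eq_The by (rule theI'[OF ex1])
  show ?thesis
    unfolding bext_eq_The[of "pb_space \<phi> B'"]
  proof (rule the_equality)
    show "is_bext_value (pb_space \<phi> B') (pb_norm \<phi> nB') (pb_kernel \<phi> k) T' (h \<circ> \<phi>) (bext B' nB' k T h \<circ> \<phi>)"
      using is_value by (simp only: transport)
  next
    fix H assume "is_bext_value (pb_space \<phi> B') (pb_norm \<phi> nB') (pb_kernel \<phi> k) T' (h \<circ> \<phi>) H"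
    then have "is_bext_value B' nB' k T h (H \<circ> inv \<phi>)"
      using transport[of _ _ h "H \<circ> inv \<phi>"] bij by (simp add: bij_is_inj)
    then have "H \<circ> inv \<phi> = bext B' nB' k T h" using ex1 is_value by blast
    then show "H = bext B' nB' k T h \<circ> \<phi>"
      using o_inv_o_cancel[OF bij_is_inj[OF bij], of H] by simp
  qed
qed

lemma bext_norm_pb:
  assumes bij: "bij \<phi>" and T': "\<And>u. u \<in> kspan k \<Longrightarrow> T' (u \<circ> \<phi>) = T u \<circ> \<phi>"
    and ex1: "\<And>h. h \<in> span_closure B' nB' k \<Longrightarrow> \<exists>!h'. is_bext_value B' nB' k T h h'"
  shows "bext_norm (pb_space \<phi> B') (pb_norm \<phi> nB') (pb_kernel \<phi> k) T' = bext_norm B' nB' k T"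
proof -
  have unit_ball: "{H \<in> span_closure (pb_space \<phi> B') (pb_norm \<phi> nB') (pb_kernel \<phi> k). pb_norm \<phi> nB' H \<le> 1}
      = (\<lambda>h. h \<circ> \<phi>) ` {h \<in> span_closure B' nB' k. nB' h \<le> 1}"
    by (subst Collect_eq_image_comp[OF bij])
      (simp add: comp_mem_span_closure_pb_iff[OF bij] pb_norm_comp[OF bij_is_surj[OF bij]])
  show ?thesis
    unfolding bext_norm_def unit_ball image_image
    by (intro SUP_cong) (simp_all add: bext_pb[OF bij T' ex1] pb_norm_comp[OF bij_is_surj[OF bij]])
qed

theorem proposition1:
  fixes B B' :: "('x \<Rightarrow> 'k::{real_normed_field,banach}) set"
    and nB nB' :: "('x \<Rightarrow> 'k) \<Rightarrow> real"
    and pair :: "('x \<Rightarrow> 'k) \<Rightarrow> ('x \<Rightarrow> 'k) \<Rightarrow> 'k"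
    and k :: "'x \<Rightarrow> 'x \<Rightarrow> 'k"
    and f :: "'x \<Rightarrow> 'x" and g :: "'y \<Rightarrow> 'y" and \<phi> :: "'y \<Rightarrow> 'x"
  assumes rkbs: "is_rkbs B nB B' nB' pair k"
    and indep: "kernel_lin_indep k"
    and bij: "bij \<phi>"
    and conj: "\<phi> \<circ> g = f \<circ> \<phi>"
  shows "(\<forall>h\<in>kspan (pb_kernel \<phi> k).
            PF k f (pb_S \<phi> h) = pb_S \<phi> (PF (pb_kernel \<phi> k) g h))
       \<and> (bounded_on_span k nB' (PF k f) \<longrightarrow>
            bounded_on_span (pb_kernel \<phi> k) (pb_norm \<phi> nB') (PF (pb_kernel \<phi> k) g)
          \<and> bext_norm (pb_space \<phi> B') (pb_norm \<phi> nB') (pb_kernel \<phi> k) (PF (pb_kernel \<phi> k) g)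
              = bext_norm B' nB' k (PF k f))"
proof -
  have B': "banach_fun_space B' nB'" and k_mem: "\<And>x. k x \<in> B'"
    using rkbs unfolding is_rkbs_def by simp_all
  have surj: "surj \<phi>" using bij by (rule bij_is_surj)
  note PF_comp = PF_pb_kernel_comp[OF indep bij conj]
  have "\<forall>h\<in>kspan (pb_kernel \<phi> k). PF k f (pb_S \<phi> h) = pb_S \<phi> (PF (pb_kernel \<phi> k) g h)"
    using surj by (auto simp: kspan_pb_kernel[OF bij] pb_S_def PF_comp)
  moreover have "bounded_on_span (pb_kernel \<phi> k) (pb_norm \<phi> nB') (PF (pb_kernel \<phi> k) g)
      \<and> bext_norm (pb_space \<phi> B') (pb_norm \<phi> nB') (pb_kernel \<phi> k) (PF (pb_kernel \<phi> k) g)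
          = bext_norm B' nB' k (PF k f)"
    if "bounded_on_span k nB' (PF k f)"
  proof
    from that obtain C where bound: "\<forall>u\<in>kspan k. nB' (PF k f u) \<le> C * nB' u"
      unfolding bounded_on_span_def by blast
    then show "bounded_on_span (pb_kernel \<phi> k) (pb_norm \<phi> nB') (PF (pb_kernel \<phi> k) g)"
      using surj unfolding bounded_on_span_def
      by (auto simp: kspan_pb_kernel[OF bij] PF_comp pb_norm_comp)
    note ex1 = ex1_bext_value[OF B' kspan_subset[OF B' k_mem] PF_mem[OF B' k_mem indep]
      PF_diff[OF indep] bound]
    show "bext_norm (pb_space \<phi> B') (pb_norm \<phi> nB') (pb_kernel \<phi> k) (PF (pb_kernel \<phi> k) g)
        = bext_norm B' nB' k (PF k f)"
      using bij PF_comp ex1 by (rule bext_norm_pb)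
  qed
  ultimately show ?thesis by blast
qed

end
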